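(* Let $\varepsilon>0$ and let $f\colon [N]\times[D]\to[M]$ be a $(k,\varepsilon)$-extractor. Then for every set $S\subseteq[N]$, fewer than $2^k$ elements of $S$ are $\varepsilon$-poor in $S$.
   Context: $[n]=\{1,\dots,n\}$. A function $f\colon [N]\times[D]\to[M]$ is a $(k,\varepsilon)$-extractor if for all $A\subseteq[N]$ with $|A|\ge 2^k$ and all $B\subseteq[M]$, $\left|\Pr\{f(X_A,X_D)\in B\} - |B|/M\right|\le\varepsilon$, where $X_A, X_D$ are independent uniformly random elements of $A$ and $[D]$. For $S\subseteq[N]$: an element $y\in[M]$ is $b$-bad for $S$ if $|f^{-1}(y)\cap S| > bD|S|/M$ (here $f^{-1}(y)=\{u\in[N]: f(u,i)=y \text{ for some } i\in[D]\}$); an element $x\in S$ is $\varepsilon$-poor in $S$ if for more than a $2\varepsilon$-fraction of $i\in[D]$ the value $f(x,i)$ is $(1/\varepsilon)$-bad for $S$. *)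

theory Defs
  imports Complex_Main
begin

text \<open>[n] = {1..n}. f :: nat => nat => nat represents f : [N] x [D] -> [M].
  Pr{f(X_A,X_D) in B} for independent uniform X_A in A, X_D in [D].\<close>

definition prob_ext :: "(nat \<Rightarrow> nat \<Rightarrow> nat) \<Rightarrow> nat \<Rightarrow> nat set \<Rightarrow> nat set \<Rightarrow> real" where
  "prob_ext f D A B = real (card {(a, i). a \<in> A \<and> i \<in> {1..D} \<and> f a i \<in> B}) / (real (card A) * real D)"

definition is_extractor ::
  "(nat \<Rightarrow> nat \<Rightarrow> nat) \<Rightarrow> nat \<Rightarrow> nat \<Rightarrow> nat \<Rightarrow> real \<Rightarrow> real \<Rightarrow> bool" where
  "is_extractor f N D M k \<epsilon> \<longleftrightarrow>
     (\<forall>A B. A \<subseteq> {1..N} \<longrightarrow> real (card A) \<ge> 2 powr k \<longrightarrow> B \<subseteq> {1..M} \<longrightarrow>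
        \<bar>prob_ext f D A B - real (card B) / real M\<bar> \<le> \<epsilon>)"

definition preimg :: "(nat \<Rightarrow> nat \<Rightarrow> nat) \<Rightarrow> nat \<Rightarrow> nat \<Rightarrow> nat \<Rightarrow> nat set" where
  "preimg f N D y = {u \<in> {1..N}. \<exists>i \<in> {1..D}. f u i = y}"

definition is_bad ::
  "(nat \<Rightarrow> nat \<Rightarrow> nat) \<Rightarrow> nat \<Rightarrow> nat \<Rightarrow> nat \<Rightarrow> real \<Rightarrow> nat set \<Rightarrow> nat \<Rightarrow> bool" where
  "is_bad f N D M b S y \<longleftrightarrow> y \<in> {1..M} \<and>
     real (card (preimg f N D y \<inter> S)) > b * real D * real (card S) / real M"

definition is_poor ::
  "(nat \<Rightarrow> nat \<Rightarrow> nat) \<Rightarrow> nat \<Rightarrow> nat \<Rightarrow> nat \<Rightarrow> real \<Rightarrow> nat set \<Rightarrow> nat \<Rightarrow> bool" where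
  "is_poor f N D M \<epsilon> S x \<longleftrightarrow> x \<in> S \<and>
     real (card {i \<in> {1..D}. is_bad f N D M (1 / \<epsilon>) S (f x i)}) > 2 * \<epsilon> * real D"

end

theory Submission
  imports Defs
begin

text \<open>If at least \<open>2^k\<close> elements of \<open>S\<close> were \<open>\<epsilon>\<close>-poor, the uniform distribution on them
  would be a \<open>k\<close>-source. Feeding it to the extractor and testing against the set \<open>B\<close> of
  \<open>(1/\<epsilon>)\<close>-bad outputs, the output lands in \<open>B\<close> with probability more than \<open>2\<epsilon>\<close>, since
  every poor element hits \<open>B\<close> for more than a \<open>2\<epsilon>\<close>-fraction of the seeds. On the other hand,
  double counting the pairs \<open>(x, y)\<close> with \<open>x \<in> S\<close> and \<open>y\<close> a neighbour of \<open>x\<close> shows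
  \<open>|B| < \<epsilon> M\<close>, so a uniform output lies in \<open>B\<close> with probability less than \<open>\<epsilon>\<close>.
  The two differ by more than \<open>\<epsilon>\<close>, contradicting the extractor property.\<close>

lemma prob_ext_eq_sum:
  assumes "finite A"
  shows "prob_ext f D A B =
    (\<Sum>a\<in>A. real (card {i \<in> {1..D}. f a i \<in> B})) / (real (card A) * real D)"
proof -
  have "{(a, i). a \<in> A \<and> i \<in> {1..D} \<and> f a i \<in> B} = Sigma A (\<lambda>a. {i \<in> {1..D}. f a i \<in> B})"
    by auto
  then show ?thesis
    unfolding prob_ext_def using assms by (simp add: card_SigmaI)
qed

lemma prob_ext_gt_if_all_gt:
  assumes "finite A" "A \<noteq> {}" "D > 0"
    and "\<And>a. a \<in> A \<Longrightarrow> real (card {i \<in> {1..D}. f a i \<in> B}) > c * real D"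
  shows "prob_ext f D A B > c"
proof -
  have "(\<Sum>a\<in>A. c * real D) < (\<Sum>a\<in>A. real (card {i \<in> {1..D}. f a i \<in> B}))"
    using assms by (intro sum_strict_mono) auto
  then have "c * (real (card A) * real D) < (\<Sum>a\<in>A. real (card {i \<in> {1..D}. f a i \<in> B}))"
    by (simp add: mult_ac)
  moreover have "real (card A) * real D > 0"
    using assms by (simp add: card_gt_0_iff)
  ultimately show ?thesis
    using assms(1) by (simp add: prob_ext_eq_sum pos_less_divide_eq)
qed

lemma sum_card_preimg_le:
  assumes "finite S" "finite Y"
  shows "(\<Sum>y\<in>Y. card (preimg f N D y \<inter> S)) \<le> D * card S"
proof -
  have "(\<Sum>y\<in>Y. card (preimg f N D y \<inter> S)) = (\<Sum>y\<in>Y. \<Sum>x\<in>S. if x \<in> preimg f N D y then 1 else 0)"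
    using assms(1) by (intro sum.cong refl) (simp add: sum.inter_filter[symmetric] Int_def conj_commute)
  also have "\<dots> = (\<Sum>x\<in>S. \<Sum>y\<in>Y. if x \<in> preimg f N D y then 1 else 0)"
    by (rule sum.swap)
  also have "\<dots> = (\<Sum>x\<in>S. card {y \<in> Y. x \<in> preimg f N D y})"
    using assms(2) by (intro sum.cong refl) (simp add: sum.inter_filter[symmetric])
  also have "\<dots> \<le> (\<Sum>x\<in>S. D)"
  proof (rule sum_mono)
    fix x
    have "{y \<in> Y. x \<in> preimg f N D y} \<subseteq> f x ` {1..D}"
      unfolding preimg_def by auto
    then have "card {y \<in> Y. x \<in> preimg f N D y} \<le> card (f x ` {1..D})"
      by (simp add: card_mono)
    also have "\<dots> \<le> D"
      using card_image_le[of "{1..D}" "f x"] by simp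
    finally show "card {y \<in> Y. x \<in> preimg f N D y} \<le> D" .
  qed
  finally show ?thesis
    by (simp add: mult.commute)
qed

lemma card_bad_lt:
  assumes "finite S" "b > 0" "M > 0"
  shows "real (card {y. is_bad f N D M b S y}) < real M / b"
proof (cases "{y. is_bad f N D M b S y} = {}")
  case True
  then show ?thesis using assms by simp
next
  case False
  define Bad where "Bad = {y. is_bad f N D M b S y}"
  define c where "c = b * real D * real (card S) / real M"
  have "finite Bad"
    unfolding Bad_def is_bad_def by simp
  have "(\<Sum>y\<in>Bad. c) < (\<Sum>y\<in>Bad. real (card (preimg f N D y \<inter> S)))"
    using \<open>finite Bad\<close> False by (intro sum_strict_mono) (auto simp: Bad_def is_bad_def c_def)
  also have "\<dots> \<le> real D * real (card S)"
    using sum_card_preimg_le[OF assms(1) \<open>finite Bad\<close>, of f N D]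
    by (metis of_nat_le_iff of_nat_mult of_nat_sum)
  finally have "real (card Bad) * (b / real M) * (real D * real (card S))
      < 1 * (real D * real (card S))"
    by (simp add: c_def mult_ac)
  then have "real (card Bad) * (b / real M) < 1"
    by (rule mult_right_less_imp_less) simp
  then show ?thesis
    using assms(2,3) by (simp add: Bad_def field_simps)
qed

theorem lemma7:
  fixes f :: "nat \<Rightarrow> nat \<Rightarrow> nat" and N D M :: nat and k \<epsilon> :: real and S :: "nat set"
  assumes "\<epsilon> > 0"
    and "D > 0" and "M > 0"
    and "\<forall>u \<in> {1..N}. \<forall>i \<in> {1..D}. f u i \<in> {1..M}"
    and "is_extractor f N D M k \<epsilon>"
    and "S \<subseteq> {1..N}"
  shows "real (card {x \<in> S. is_poor f N D M \<epsilon> S x}) < 2 powr k"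
proof (rule ccontr)
  define P where "P = {x \<in> S. is_poor f N D M \<epsilon> S x}"
  define Bad where "Bad = {y. is_bad f N D M (1 / \<epsilon>) S y}"
  assume "\<not> real (card {x \<in> S. is_poor f N D M \<epsilon> S x}) < 2 powr k"
  then have large: "real (card P) \<ge> 2 powr k"
    by (simp add: P_def)
  have "finite S"
    using assms(6) finite_subset by blast
  then have "finite P"
    by (simp add: P_def)
  have "P \<noteq> {}"
    using large powr_gt_zero[of 2 k] by auto
  have "\<bar>prob_ext f D P Bad - real (card Bad) / real M\<bar> \<le> \<epsilon>"
  proof -
    have "P \<subseteq> {1..N}" "Bad \<subseteq> {1..M}"
      using assms(6) by (auto simp: P_def Bad_def is_bad_def)
    then show ?thesis
      using assms(5) large unfolding is_extractor_def by blast
  qed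
  moreover have "prob_ext f D P Bad > 2 * \<epsilon>"
    using \<open>finite P\<close> \<open>P \<noteq> {}\<close> assms(2) by (rule prob_ext_gt_if_all_gt) (auto simp: P_def Bad_def is_poor_def)
  moreover have "real (card Bad) / real M < \<epsilon>"
    using card_bad_lt[OF \<open>finite S\<close>, of "1 / \<epsilon>" M f N D] assms(1,3)
    by (simp add: Bad_def field_simps)
  ultimately show False
    by linarith
qed

end
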